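(* In the complex single-interference setting of the context (with $N\ge2$, $\|h_0\|=\|h_1\|=1$, $h_0^{\sf H}h_1=\sin\tau\,e^{i\phi_z}$, $\tau\in[0,\pi/2)$, $\phi_z\in[0,2\pi)$, $\sigma_0^2,\sigma_1^2,\sigma_n^2>0$, $c_1=|c_1|e^{i\phi_c}$, $|c_1|\le\sigma_0\sigma_1$), let $\delta_1:=\sigma_n^2\tan\tau-|c_1|\cos\tau\cos(\phi_c+\phi_z)$ and $\delta_2:=\sigma_n^2\tan\tau-|c_1|\cos\tau\,e^{i(\phi_c+\phi_z)}$. Then \[ \mathrm{MSE}_{\rm MVDR}=\frac{\sigma_n^2(\sigma_1^2+\sigma_n^2)+|c_1|^2\cos^2\tau}{\sigma_1^2\cos^2\tau+\sigma_n^2},\quad \mathrm{MSE}_{\rm ZF}=\sigma_n^2(\tan^2\tau+1),\quad \mathrm{MSE}_{\rm MMSE\text{-}DR}=\frac{\sigma_n^2(\sigma_1^2+\sigma_n^2)}{\sigma_1^2\cos^2\tau+\sigma_n^2}. \] If $\delta_2=0$, then $\mathrm{MSE}(\lambda)=\mathrm{MSE}_{\rm ZF}=\mathrm{MSE}_{\rm MVDR}$ for all $\lambda\ge0$. If $\delta_2\neq0$, then with $\gamma:=\delta_1\sigma_n^2\tan\tau/|\delta_2|^2$, \[ \mathrm{MSE}_{\rm RZF}=\begin{cases}\mathrm{MSE}_{\rm ZF}, & \gamma\le0,\\[1mm] \mathrm{MSE}_{\rm MMSE\text{-}DR}+\Big(1-\Big|\dfrac{\delta_1}{\delta_2}\Big|^2\Big)\dfrac{\sigma_n^4\tan^2\tau}{\sigma_1^2\cos^2\tau+\sigma_n^2},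 & \gamma\in(0,1),\\[2mm] \mathrm{MSE}_{\rm MVDR}, & \gamma\ge1.\end{cases} \]
   Context: Complex single-interference model: $y(k)=s_0(k)h_0+s_1(k)h_1+n(k)\in\mathbb{C}^N$, with zero-mean jointly weakly stationary complex signals $s_0,s_1$, $\sigma_j^2:=E|s_j(k)|^2$, $c_1:=E[s_0^*(k)s_1(k)]$, and noise $n(k)\sim\mathcal{CN}(0,\sigma_n^2I)$ uncorrelated with the signals. $R:=E[y(k)y(k)^{\sf H}]$. The MSE of $w$ is $J_{\rm MSE}(w):=E|w^{\sf H}y(k)-s_0(k)|^2$. Beamformers: RZF $w_{\rm RZF}(\lambda):=R_\lambda^{-1}h_0/(h_0^{\sf H}R_\lambda^{-1}h_0)$ with $R_\lambda:=R+\lambda h_1h_1^{\sf H}$, $\lambda\ge0$; MVDR $w_{\rm MVDR}:=w_{\rm RZF}(0)$; ZF $w_{\rm ZF}:=R^{-1}H(H^{\sf H}R^{-1}H)^{-1}e_1$ with $H=[h_0\ h_1]$, $e_1=[1,0]^{\sf T}$; MMSE-DR $w_{\rm MMSE\text{-}DR}:=\widetilde R^{-1}h_0/(h_0^{\sf H}\widetilde R^{-1}h_0)$ with $\widetilde R:=\sigma_n^2I+\sigma_1^2h_1h_1^{\sf H}$. $\mathrm{MSE}(\lambda):=J_{\rm MSE}(w_{\rm RZF}(\lambda))$, $\mathrm{MSE}_{\rm RZF}:=\inf_{\lambda\ge0}\mathrm{MSE}(\lambda)$, and $\mathrm{MSE}_X:=J_{\rm MSE}(w_X)$ for $X\in\{\rm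 MVDR,ZF,MMSE\text{-}DR\}$. *)

theory Defs
  imports "HOL-Analysis.Analysis"
begin

definition herm :: "complex^'n \<Rightarrow> complex^'n \<Rightarrow> complex" where
  "herm x y = (\<Sum>i\<in>UNIV. cnj (x$i) * y$i)"

definition outer :: "complex^'n \<Rightarrow> complex^'n \<Rightarrow> complex^'n^'n" where
  "outer x y = (\<chi> i j. x$i * cnj (y$j))"

definition hconj :: "complex^'n^'m \<Rightarrow> complex^'m^'n" where
  "hconj A = (\<chi> i j. cnj (A$j$i))"

definition smat :: "complex \<Rightarrow> complex^'n^'m \<Rightarrow> complex^'n^'m" where
  "smat c A = (\<chi> i j. c * A$i$j)"

(* R = E[y y^H] for y = s0 h0 + s1 h1 + n, with E|s_j|^2 = sj2, E[s0^* s1] = c1,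
   noise covariance sn2 I uncorrelated with the signals *)
definition Rcov :: "real \<Rightarrow> real \<Rightarrow> real \<Rightarrow> complex \<Rightarrow> complex^'n \<Rightarrow> complex^'n \<Rightarrow> complex^'n^'n" where
  "Rcov s02 s12 sn2 c1 h0 h1 =
     smat (of_real s02) (outer h0 h0) + smat (of_real s12) (outer h1 h1)
     + smat (cnj c1) (outer h0 h1) + smat c1 (outer h1 h0) + smat (of_real sn2) (mat 1)"

(* p = E[y s0^*] *)
definition pcross :: "real \<Rightarrow> complex \<Rightarrow> complex^'n \<Rightarrow> complex^'n \<Rightarrow> complex^'n" where
  "pcross s02 c1 h0 h1 = of_real s02 *s h0 + c1 *s h1"

(* J_MSE(w) = E|w^H y - s0|^2 = w^H R w - w^H p - p^H w + sigma0^2 *)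
definition JMSE :: "real \<Rightarrow> real \<Rightarrow> real \<Rightarrow> complex \<Rightarrow> complex^'n \<Rightarrow> complex^'n \<Rightarrow> complex^'n \<Rightarrow> real" where
  "JMSE s02 s12 sn2 c1 h0 h1 w =
     Re (herm w (Rcov s02 s12 sn2 c1 h0 h1 *v w) - herm w (pcross s02 c1 h0 h1)
         - herm (pcross s02 c1 h0 h1) w) + s02"

definition dlbf :: "complex^'n^'n \<Rightarrow> complex^'n \<Rightarrow> complex^'n" where
  "dlbf Q h0 = (1 / herm h0 (matrix_inv Q *v h0)) *s (matrix_inv Q *v h0)"

definition wRZF :: "real \<Rightarrow> real \<Rightarrow> real \<Rightarrow> complex \<Rightarrow> complex^'n \<Rightarrow> complex^'n \<Rightarrow> real \<Rightarrow> complex^'n" where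
  "wRZF s02 s12 sn2 c1 h0 h1 lam =
     dlbf (Rcov s02 s12 sn2 c1 h0 h1 + smat (of_real lam) (outer h1 h1)) h0"

definition wMVDR :: "real \<Rightarrow> real \<Rightarrow> real \<Rightarrow> complex \<Rightarrow> complex^'n \<Rightarrow> complex^'n \<Rightarrow> complex^'n" where
  "wMVDR s02 s12 sn2 c1 h0 h1 = wRZF s02 s12 sn2 c1 h0 h1 0"

definition Hmat :: "complex^'n \<Rightarrow> complex^'n \<Rightarrow> complex^2^'n" where
  "Hmat h0 h1 = (\<chi> i k. if k = 1 then h0$i else h1$i)"

definition e1 :: "complex^2" where
  "e1 = (\<chi> k. if k = 1 then 1 else 0)"

definition wZF :: "real \<Rightarrow> real \<Rightarrow> real \<Rightarrow> complex \<Rightarrow> complex^'n \<Rightarrow> complex^'n \<Rightarrow> complex^'n" where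
  "wZF s02 s12 sn2 c1 h0 h1 =
     (let Ri = matrix_inv (Rcov s02 s12 sn2 c1 h0 h1); H = Hmat h0 h1 in
      Ri *v (H *v (matrix_inv (hconj H ** Ri ** H) *v e1)))"

definition wMMSEDR :: "real \<Rightarrow> real \<Rightarrow> complex^'n \<Rightarrow> complex^'n \<Rightarrow> complex^'n" where
  "wMMSEDR s12 sn2 h0 h1 = dlbf (smat (of_real sn2) (mat 1) + smat (of_real s12) (outer h1 h1)) h0"

definition MSEfun :: "real \<Rightarrow> real \<Rightarrow> real \<Rightarrow> complex \<Rightarrow> complex^'n \<Rightarrow> complex^'n \<Rightarrow> real \<Rightarrow> real" where
  "MSEfun s02 s12 sn2 c1 h0 h1 lam = JMSE s02 s12 sn2 c1 h0 h1 (wRZF s02 s12 sn2 c1 h0 h1 lam)"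

definition MSE_RZF :: "real \<Rightarrow> real \<Rightarrow> real \<Rightarrow> complex \<Rightarrow> complex^'n \<Rightarrow> complex^'n \<Rightarrow> real" where
  "MSE_RZF s02 s12 sn2 c1 h0 h1 = (INF lam\<in>{0..}. MSEfun s02 s12 sn2 c1 h0 h1 lam)"

definition MSE_MVDR :: "real \<Rightarrow> real \<Rightarrow> real \<Rightarrow> complex \<Rightarrow> complex^'n \<Rightarrow> complex^'n \<Rightarrow> real" where
  "MSE_MVDR s02 s12 sn2 c1 h0 h1 = JMSE s02 s12 sn2 c1 h0 h1 (wMVDR s02 s12 sn2 c1 h0 h1)"

definition MSE_ZF :: "real \<Rightarrow> real \<Rightarrow> real \<Rightarrow> complex \<Rightarrow> complex^'n \<Rightarrow> complex^'n \<Rightarrow> real" where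
  "MSE_ZF s02 s12 sn2 c1 h0 h1 = JMSE s02 s12 sn2 c1 h0 h1 (wZF s02 s12 sn2 c1 h0 h1)"

definition MSE_MMSEDR :: "real \<Rightarrow> real \<Rightarrow> real \<Rightarrow> complex \<Rightarrow> complex^'n \<Rightarrow> complex^'n \<Rightarrow> real" where
  "MSE_MMSEDR s02 s12 sn2 c1 h0 h1 = JMSE s02 s12 sn2 c1 h0 h1 (wMMSEDR s12 sn2 h0 h1)"

end

theory Submission
  imports Defs
begin

text \<open>
  All beamformers involved are distortionless and lie in the span of \<open>h0\<close> and \<open>h1\<close>, so each is
  determined by its interference response \<open>\<xi> = w\<^sup>H h1\<close>, and its MSE is
  \<open>\<sigma>\<^sub>1\<^sup>2 |\<xi>|\<^sup>2 + \<sigma>\<^sub>n\<^sup>2 (1 + |\<xi> - h0\<^sup>H h1|\<^sup>2 / cos\<^sup>2 \<tau>)\<close>.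
  For RZF the response is \<open>\<xi> = u cos \<tau> cis \<phi>\<^sub>z cnj \<delta>\<^sub>2\<close> with
  \<open>u = 1 / ((\<sigma>\<^sub>1\<^sup>2 + \<lambda>) cos\<^sup>2 \<tau> + \<sigma>\<^sub>n\<^sup>2)\<close>; ZF is \<open>\<xi> = 0\<close>, and MMSE-DR is the
  MVDR point \<open>\<lambda> = 0\<close> with \<open>\<delta>\<^sub>2\<close> replaced by \<open>\<sigma>\<^sub>n\<^sup>2 tan \<tau>\<close>.
  So the MSE is a quadratic in \<open>u\<close> with linear coefficient \<open>-2 \<delta>\<^sub>1 \<sigma>\<^sub>n\<^sup>2 tan \<tau>\<close>,
  and \<open>u\<close> sweeps the interval \<open>(0, 1 / (\<sigma>\<^sub>1\<^sup>2 cos\<^sup>2 \<tau> + \<sigma>\<^sub>n\<^sup>2)]\<close>;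
  \<open>\<gamma>\<close> locates the vertex relative to this interval, which decides whether the infimum is
  approached at \<open>u \<rightarrow> 0\<close> (ZF), attained at the vertex, or attained at the right end (MVDR).
\<close>

lemma herm_add_right: "herm x (y + z) = herm x y + herm x z"
  by (simp add: herm_def sum.distrib distrib_left)

lemma herm_add_left: "herm (x + y) z = herm x z + herm y z"
  by (simp add: herm_def sum.distrib distrib_right)

lemma herm_diff_right: "herm x (y - z) = herm x y - herm x z"
  by (simp add: herm_def sum_subtractf right_diff_distrib)

lemma herm_diff_left: "herm (x - y) z = herm x z - herm y z"
  by (simp add: herm_def sum_subtractf left_diff_distrib)

lemma herm_scale_right: "herm x (a *s y) = a * herm x y"
  by (simp add: herm_def sum_distrib_left mult.assoc mult.left_commute)

lemma herm_scale_left: "herm (a *s x) y = cnj a * herm x y"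
  by (simp add: herm_def sum_distrib_left mult.assoc)

lemma herm_zero_right [simp]: "herm x 0 = 0"
  by (simp add: herm_def)

lemma cnj_herm: "cnj (herm x y) = herm y x"
  by (simp add: herm_def mult.commute)

lemma herm_self: "herm x x = of_real ((norm x)^2)"
proof -
  have "herm x x = (\<Sum>i\<in>UNIV. of_real ((cmod (x$i))^2))"
    unfolding herm_def by (intro sum.cong refl) (metis complex_norm_square of_real_power mult.commute)
  also have "\<dots> = of_real ((norm x)^2)"
    by (simp add: norm_vec_def L2_set_def sum_nonneg)
  finally show ?thesis .
qed

lemma outer_mult_vec: "outer x y *v z = herm y z *s x"
  by (simp add: outer_def herm_def matrix_vector_mult_def vec_eq_iff sum_distrib_left mult_ac)

lemma smat_mult_vec: "smat c A *v z = c *s (A *v z)"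
  by (simp add: smat_def matrix_vector_mult_def vec_eq_iff sum_distrib_left mult.assoc)

lemma Rcov_mult_vec:
  "Rcov a L sn2 cc h0 h1 *v v =
     (of_real a * herm h0 v + cnj cc * herm h1 v) *s h0
     + (of_real L * herm h1 v + cc * herm h0 v) *s h1 + of_real sn2 *s v"
  by (simp add: Rcov_def smat_mult_vec outer_mult_vec vec_eq_iff algebra_simps)

lemma Rcov_add_outer:
  "Rcov a L sn2 cc h0 h1 + smat (of_real lam) (outer h1 h1) = Rcov a (L + lam) sn2 cc h0 h1"
  by (simp add: Rcov_def smat_def vec_eq_iff algebra_simps)

lemma Rcov_no_signal:
  "smat (of_real sn2) (mat 1) + smat (of_real L) (outer h1 h1) = Rcov 0 L sn2 0 h0 h1"
  by (simp add: Rcov_def smat_def vec_eq_iff)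

lemma invertible_if_kernel_trivial:
  fixes A :: "'a::field^'n^'n"
  assumes "\<And>x. A *v x = 0 \<Longrightarrow> x = 0"
  shows "invertible A"
  using assms matrix_left_invertible_ker invertible_left_inverse by blast

lemma matrix_inv_inverse:
  fixes A :: "'a::field^'n^'n"
  assumes "invertible A"
  shows "matrix_inv A ** A = mat 1" and "A ** matrix_inv A = mat 1"
  using someI_ex[of "\<lambda>A'. A ** A' = mat 1 \<and> A' ** A = mat 1"] assms
  unfolding invertible_def matrix_inv_def by auto

lemma matrix_inv_mult_vec_eq:
  fixes A :: "'a::field^'n^'n"
  assumes "invertible A" and "A *v v = b"
  shows "matrix_inv A *v b = v"
  using matrix_inv_inverse(1)[OF assms(1)] assms(2)
  by (metis matrix_vector_mul_assoc matrix_vector_mul_lid)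

lemma mult_vec_matrix_inv:
  fixes A :: "'a::field^'n^'n"
  assumes "invertible A"
  shows "A *v (matrix_inv A *v b) = b"
  using matrix_inv_inverse(2)[OF assms] by (metis matrix_vector_mul_assoc matrix_vector_mul_lid)

lemma mult_le_quadratic_form:
  fixes a L k P Q :: real
  assumes "a \<ge> 0" "L \<ge> 0" "k^2 \<le> a * L" "P \<ge> 0" "Q \<ge> 0"
  shows "2 * k * P * Q \<le> a * P^2 + L * Q^2"
proof -
  have "k \<le> sqrt a * sqrt L"
    using real_le_rsqrt[OF assms(3)] by (simp add: real_sqrt_mult)
  hence "2 * k * P * Q \<le> 2 * (sqrt a * P) * (sqrt L * Q)"
    using assms(4,5) by (simp add: mult_left_mono mult_ac)
  also have "\<dots> \<le> (sqrt a * P)^2 + (sqrt L * Q)^2"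
    by (rule sum_squares_bound)
  also have "\<dots> = a * P^2 + L * Q^2"
    using assms(1,2) by (simp add: power_mult_distrib)
  finally show ?thesis .
qed

lemma invertible_Rcov:
  assumes a: "a \<ge> 0" and L: "L \<ge> 0" and sn2: "sn2 > 0" and cc: "(cmod cc)^2 \<le> a * L"
  shows "invertible (Rcov a L sn2 cc h0 h1)"
proof (rule invertible_if_kernel_trivial)
  fix v assume Rv: "Rcov a L sn2 cc h0 h1 *v v = 0"
  define p where "p = herm h0 v"
  define q where "q = herm h1 v"
  define z where "z = cc * p * cnj q"
  have vp: "herm v h0 = cnj p" "herm v h1 = cnj q"
    unfolding p_def q_def by (simp_all add: cnj_herm)
  have sq: "(complex_of_real (cmod p))^2 = p * cnj p" "(complex_of_real (cmod q))^2 = q * cnj q"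
    by (metis complex_norm_square of_real_power)+
  have "herm v (Rcov a L sn2 cc h0 h1 *v v)
      = of_real (a * (cmod p)^2 + L * (cmod q)^2 + sn2 * (norm v)^2) + (z + cnj z)"
    unfolding Rcov_mult_vec herm_add_right herm_scale_right vp herm_self
    by (simp add: p_def[symmetric] q_def[symmetric] z_def algebra_simps sq)
  hence form: "a * (cmod p)^2 + L * (cmod q)^2 + sn2 * (norm v)^2 + 2 * Re z = 0"
    using Rv by (simp add: complex_eq_iff)
  have "- Re z \<le> cmod cc * cmod p * cmod q"
    using abs_Re_le_cmod[of z] by (simp add: z_def norm_mult)
  moreover have "2 * cmod cc * cmod p * cmod q \<le> a * (cmod p)^2 + L * (cmod q)^2"
    using a L cc by (intro mult_le_quadratic_form) auto
  ultimately have "sn2 * (norm v)^2 \<le> 0" using form by linarith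
  thus "v = 0" using sn2 by (simp add: mult_le_0_iff)
qed

lemma JMSE_distortionless:
  assumes "herm w h0 = 1"
  shows "JMSE s02 s12 sn2 c1 h0 h1 w = s12 * (cmod (herm w h1))^2 + sn2 * (norm w)^2"
proof -
  define u where "u = herm w h1"
  have w0: "herm h0 w = 1" and w1: "herm h1 w = cnj u"
    using assms cnj_herm[of w] by (metis complex_cnj_one, simp add: u_def)
  have "u * cnj u = of_real ((cmod u)^2)" by (metis complex_norm_square)
  moreover have "cmod u * cmod u = Re u * Re u + Im u * Im u"
    using cmod_power2[of u] by (simp add: power2_eq_square)
  ultimately show ?thesis
    unfolding JMSE_def Rcov_mult_vec pcross_def
    by (simp add: herm_add_right herm_add_left herm_scale_right herm_scale_left assms w0 w1 herm_self
        u_def[symmetric] algebra_simps power2_eq_square)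
qed

lemma dlbf_eqI:
  assumes Q: "invertible Q" and Qw: "Q *v w = \<kappa> *s h0" and w: "herm h0 w = 1"
  shows "dlbf Q h0 = w"
proof -
  have "\<kappa> \<noteq> 0"
  proof
    assume "\<kappa> = 0"
    hence "w = 0" using matrix_inv_mult_vec_eq[OF Q Qw] by simp
    thus False using w by simp
  qed
  moreover have "matrix_inv Q *v h0 = (1 / \<kappa>) *s w"
    using \<open>\<kappa> \<noteq> 0\<close> by (intro matrix_inv_mult_vec_eq[OF Q]) (simp add: vector_scalar_commute Qw)
  ultimately show ?thesis
    unfolding dlbf_def by (simp add: herm_scale_right w)
qed

lemma Hmat_mult_vec: "Hmat h0 h1 *v z = z$1 *s h0 + z$2 *s h1"
  by (simp add: Hmat_def matrix_vector_mult_def vec_eq_iff sum_2 mult.commute)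

lemma hconj_Hmat_mult_vec: "hconj (Hmat h0 h1) *v w = vector [herm h0 w, herm h1 w]"
  by (simp add: Hmat_def hconj_def matrix_vector_mult_def herm_def vec_eq_iff forall_2)

lemma wZF_eqI:
  fixes s02 s12 sn2 :: real and c1 :: complex and h0 h1 :: "complex^'n"
  defines "R \<equiv> Rcov s02 s12 sn2 c1 h0 h1" and "H \<equiv> Hmat h0 h1"
  assumes R: "invertible R" and M: "invertible (hconj H ** matrix_inv R ** H)"
    and Rw: "R *v w = H *v z" and w0: "herm h0 w = 1" and w1: "herm h1 w = 0"
  shows "wZF s02 s12 sn2 c1 h0 h1 = w"
proof -
  have RiHz: "matrix_inv R *v (H *v z) = w"
    using matrix_inv_mult_vec_eq[OF R Rw] .
  have "(hconj H ** matrix_inv R ** H) *v z = e1"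
    unfolding matrix_vector_mul_assoc[symmetric] RiHz
    by (simp add: H_def hconj_Hmat_mult_vec w0 w1 e1_def vec_eq_iff forall_2)
  hence "matrix_inv (hconj H ** matrix_inv R ** H) *v e1 = z"
    by (rule matrix_inv_mult_vec_eq[OF M])
  thus ?thesis
    unfolding wZF_def Let_def R_def[symmetric] H_def[symmetric] using RiHz by simp
qed

locale steering_pair =
  fixes h0 h1 :: "complex^'n" and \<rho> :: complex and c :: real
  assumes norm_h0: "norm h0 = 1" and norm_h1: "norm h1 = 1" and herm_h0_h1: "herm h0 h1 = \<rho>"
    and c_pos: "c > 0" and norm_rho_sq: "(cmod \<rho>)^2 + c^2 = 1"
begin

definition g :: "complex^'n" where
  "g = of_real (1/c) *s (h1 - \<rho> *s h0)"

text \<open>\<open>beam \<xi>\<close> is the distortionless beamformer in the span of \<open>h0\<close> and \<open>h1\<close> whose response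
  \<open>herm w h1\<close> to the interference is \<open>\<xi>\<close>; the unit vector \<open>g\<close> completes \<open>h0\<close> to an orthonormal
  basis of that span.\<close>

definition beam :: "complex \<Rightarrow> complex^'n" where
  "beam \<xi> = h0 + (cnj (\<xi> - \<rho>) / of_real c) *s g"

lemma herm_h0_h0: "herm h0 h0 = 1"
  using herm_self[of h0] norm_h0 by simp

lemma herm_h1_h1: "herm h1 h1 = 1"
  using herm_self[of h1] norm_h1 by simp

lemma herm_h1_h0: "herm h1 h0 = cnj \<rho>"
  using cnj_herm[of h0 h1] herm_h0_h1 by simp

lemma rho_mult_cnj: "\<rho> * cnj \<rho> = of_real (1 - c^2)"
  using norm_rho_sq complex_norm_square[of \<rho>] by (metis add_diff_cancel_right')

lemma herm_h0_g: "herm h0 g = 0"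
  by (simp add: g_def herm_scale_right herm_diff_right herm_h0_h0 herm_h0_h1)

lemma herm_h1_g: "herm h1 g = c"
proof -
  have "herm h1 g = of_real (1/c) * (1 - \<rho> * cnj \<rho>)"
    unfolding g_def herm_scale_right herm_diff_right herm_h1_h1 herm_h1_h0 by (simp add: mult.commute)
  thus ?thesis using c_pos by (simp add: rho_mult_cnj power2_eq_square)
qed

lemma herm_g_g: "herm g g = 1"
proof -
  have "herm g g = of_real (1/c) * (herm h1 g - cnj \<rho> * herm h0 g)"
    by (subst (1) g_def) (simp add: herm_scale_left herm_diff_left diff_divide_distrib)
  thus ?thesis using c_pos by (simp add: herm_h1_g herm_h0_g)
qed

lemma herm_g_h0: "herm g h0 = 0"
  using cnj_herm[of h0 g] herm_h0_g by simp

lemma herm_g_h1: "herm g h1 = c"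
  using cnj_herm[of h1 g] herm_h1_g by simp

lemma herm_beam_h0: "herm (beam \<xi>) h0 = 1"
  by (simp add: beam_def herm_add_left herm_scale_left herm_h0_h0 herm_g_h0)

lemma herm_h0_beam: "herm h0 (beam \<xi>) = 1"
  by (simp add: beam_def herm_add_right herm_scale_right herm_h0_h0 herm_h0_g)

lemma herm_beam_h1: "herm (beam \<xi>) h1 = \<xi>"
  using c_pos by (simp add: beam_def herm_add_left herm_scale_left herm_h0_h1 herm_g_h1)

lemma herm_h1_beam: "herm h1 (beam \<xi>) = cnj \<xi>"
  using cnj_herm[of "beam \<xi>" h1] herm_beam_h1 by simp

lemma norm_beam_sq: "(norm (beam \<xi>))^2 = 1 + (cmod (\<xi> - \<rho>))^2 / c^2"
proof -
  have "herm (beam \<xi>) (beam \<xi>) = 1 + cnj (\<xi> - \<rho>) * (\<xi> - \<rho>) / of_real (c^2)"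
    by (simp add: beam_def herm_add_left herm_add_right herm_scale_left herm_scale_right
        herm_h0_h0 herm_h0_g herm_g_h0 herm_g_g power2_eq_square)
  also have "\<dots> = of_real (1 + (cmod (\<xi> - \<rho>))^2 / c^2)"
    using complex_norm_square[of "\<xi> - \<rho>"] by (simp add: mult.commute)
  finally show ?thesis
    unfolding herm_self of_real_eq_iff .
qed

lemma JMSE_beam:
  "JMSE s02 s12 sn2 c1 h0 h1 (beam \<xi>) = s12 * (cmod \<xi>)^2 + sn2 * (1 + (cmod (\<xi> - \<rho>))^2 / c^2)"
  by (simp add: JMSE_distortionless herm_beam_h0 herm_beam_h1 norm_beam_sq)

lemma Rcov_mult_beam:
  assumes \<xi>: "of_real (L * c^2 + sn2) * \<xi> = of_real sn2 * \<rho> - of_real (c^2) * cnj cc"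
  shows "\<exists>\<kappa>. Rcov a L sn2 cc h0 h1 *v beam \<xi> = \<kappa> *s h0"
proof -
  define x where "x = cnj (\<xi> - \<rho>) / of_real c"
  have c: "complex_of_real c \<noteq> 0" using c_pos by simp
  have "of_real c * (of_real L * cnj \<xi> + cc + of_real sn2 * x / of_real c)
      = (of_real (L * c^2 + sn2) * cnj \<xi> - of_real sn2 * cnj \<rho> + of_real (c^2) * cc) / of_real c"
    using c by (simp add: x_def field_simps power2_eq_square)
  also have "\<dots> = 0"
    using arg_cong[OF \<xi>, of cnj] by simp
  finally have h1_coeff: "of_real L * cnj \<xi> + cc + of_real sn2 * x / of_real c = 0"
    using c by simp
  have "Rcov a L sn2 cc h0 h1 *v beam \<xi>
      = (of_real a + cnj cc * cnj \<xi> + of_real sn2 - of_real sn2 * x * \<rho> / of_real c) *s h0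
        + (of_real L * cnj \<xi> + cc + of_real sn2 * x / of_real c) *s h1"
    unfolding Rcov_mult_vec herm_h0_beam herm_h1_beam
    using c by (simp add: beam_def g_def x_def vec_eq_iff field_simps)
  thus ?thesis unfolding h1_coeff vector_smult_lzero add_0_right by blast
qed

lemma dlbf_Rcov:
  assumes "a \<ge> 0" "L \<ge> 0" "sn2 > 0" "(cmod cc)^2 \<le> a * L"
  shows "dlbf (Rcov a L sn2 cc h0 h1) h0
    = beam ((of_real sn2 * \<rho> - of_real (c^2) * cnj cc) / of_real (L * c^2 + sn2))"
proof -
  define D where "D = L * c^2 + sn2"
  have "D > 0" using assms(2,3) by (simp add: D_def add_nonneg_pos)
  hence "complex_of_real D \<noteq> 0" by simp
  hence "of_real D * ((of_real sn2 * \<rho> - of_real (c^2) * cnj cc) / of_real D)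
      = of_real sn2 * \<rho> - of_real (c^2) * cnj cc"
    by simp
  then obtain \<kappa> where "Rcov a L sn2 cc h0 h1 *v beam ((of_real sn2 * \<rho> - of_real (c^2) * cnj cc)
      / of_real D) = \<kappa> *s h0"
    using Rcov_mult_beam unfolding D_def by blast
  thus ?thesis
    unfolding D_def
    using invertible_Rcov[OF assms] herm_h0_beam by (intro dlbf_eqI)
qed

lemma Hmat_mult_vec_eq_0:
  assumes "Hmat h0 h1 *v y = 0"
  shows "y = 0"
proof -
  have y: "y$1 *s h0 + y$2 *s h1 = 0"
    using assms by (simp add: Hmat_mult_vec)
  have e0: "y$1 + y$2 * \<rho> = 0"
    using arg_cong[OF y, of "herm h0"] by (simp add: herm_add_right herm_scale_right herm_h0_h0 herm_h0_h1)
  have e1: "y$1 * cnj \<rho> + y$2 = 0"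
    using arg_cong[OF y, of "herm h1"] by (simp add: herm_add_right herm_scale_right herm_h1_h1 herm_h1_h0)
  have "y$2 * of_real (c^2) = 0"
    using e0 e1 rho_mult_cnj by (simp add: eq_neg_iff_add_eq_0[symmetric] algebra_simps)
  hence "y$2 = 0" using c_pos by simp
  thus "y = 0" using e0 by (simp add: vec_eq_iff forall_2)
qed

lemma invertible_ZF_gram:
  assumes "a \<ge> 0" "L \<ge> 0" and sn2: "sn2 > 0" and "(cmod cc)^2 \<le> a * L"
  shows "invertible (hconj (Hmat h0 h1) ** matrix_inv (Rcov a L sn2 cc h0 h1) ** Hmat h0 h1)"
proof (rule invertible_if_kernel_trivial)
  let ?R = "Rcov a L sn2 cc h0 h1" and ?H = "Hmat h0 h1"
  fix y assume "(hconj ?H ** matrix_inv ?R ** ?H) *v y = 0"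
  define q where "q = matrix_inv ?R *v (?H *v y)"
  have "hconj ?H *v q = 0"
    using \<open>_ *v y = 0\<close> by (simp add: q_def matrix_vector_mul_assoc[symmetric])
  hence q: "herm h0 q = 0" "herm h1 q = 0"
    by (simp_all add: hconj_Hmat_mult_vec vec_eq_iff forall_2)
  have "?H *v y = ?R *v q"
    unfolding q_def by (rule mult_vec_matrix_inv[OF invertible_Rcov[OF assms], symmetric])
  also have "\<dots> = of_real sn2 *s q"
    by (simp add: Rcov_mult_vec q)
  finally have Hy: "?H *v y = of_real sn2 *s q" .
  have "of_real sn2 * of_real ((norm q)^2) = herm (?H *v y) q"
    unfolding Hy herm_scale_left herm_self by simp
  also have "\<dots> = 0"
    using q cnj_herm[of h0 q] cnj_herm[of h1 q]
    by (simp add: Hmat_mult_vec herm_add_left herm_scale_left)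
  finally have "q = 0" using sn2 by simp
  thus "y = 0" using Hy Hmat_mult_vec_eq_0 by simp
qed

lemma wZF_Rcov:
  assumes "a \<ge> 0" "L \<ge> 0" "sn2 > 0" "(cmod cc)^2 \<le> a * L"
  shows "wZF a L sn2 cc h0 h1 = beam 0"
proof (rule wZF_eqI)
  define x where "x = - cnj \<rho> / of_real c"
  have c: "complex_of_real c \<noteq> 0" using c_pos by simp
  show "Rcov a L sn2 cc h0 h1 *v beam 0 = Hmat h0 h1 *v
      vector [of_real a + of_real sn2 - of_real sn2 * x * \<rho> / of_real c, cc + of_real sn2 * x / of_real c]"
    unfolding Rcov_mult_vec herm_h0_beam herm_h1_beam Hmat_mult_vec
    using c by (simp add: beam_def g_def x_def vec_eq_iff field_simps)
  show "herm h1 (beam 0) = 0" by (simp add: herm_h1_beam)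
qed (use assms invertible_Rcov invertible_ZF_gram herm_h0_beam in auto)

end

lemma INF_attained:
  fixes f :: "'a \<Rightarrow> real"
  assumes "x0 \<in> A" "\<And>x. x \<in> A \<Longrightarrow> f x0 \<le> f x"
  shows "(INF x\<in>A. f x) = f x0"
proof (rule antisym)
  have "bdd_below (f ` A)" using assms by (intro bdd_belowI[of _ "f x0"]) auto
  thus "(INF x\<in>A. f x) \<le> f x0" using assms by (intro cINF_lower) auto
  show "f x0 \<le> (INF x\<in>A. f x)" using assms by (intro cINF_greatest) auto
qed

lemma INF_quadratic_Ioc_nonpos:
  fixes T \<beta> C u0 :: real
  assumes u0: "u0 > 0" and C: "C \<ge> 0" and \<beta>: "\<beta> \<le> 0"
  shows "(INF u\<in>{0<..u0}. T - 2*\<beta>*u + C*u^2) = T"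
proof (rule antisym)
  have lower: "T \<le> T - 2*\<beta>*u + C*u^2" if "u > 0" for u
    using mult_nonpos_nonneg[OF \<beta>, of u] mult_nonneg_nonneg[OF C, of "u^2"] that by simp
  show "T \<le> (INF u\<in>{0<..u0}. T - 2*\<beta>*u + C*u^2)"
    using u0 lower by (intro cINF_greatest) auto
  show "(INF u\<in>{0<..u0}. T - 2*\<beta>*u + C*u^2) \<le> T"
  proof (rule field_le_epsilon)
    fix e :: real assume e: "e > 0"
    define K where "K = C * u0 - 2 * \<beta> + 1"
    have K: "K \<ge> 1" using \<beta> mult_nonneg_nonneg[OF C, of u0] u0 unfolding K_def by simp
    define u where "u = min u0 (e / K)"
    have u: "0 < u" "u \<le> u0" "K * u \<le> e"
      using u0 e K unfolding u_def by (auto simp: min_def field_simps)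
    have "C * u^2 \<le> C * u0 * u"
      using C u by (simp add: power2_eq_square mult_right_mono mult.assoc mult_left_mono)
    hence "T - 2*\<beta>*u + C*u^2 \<le> T + e"
      using u unfolding K_def by (simp add: algebra_simps)
    moreover have "(INF u\<in>{0<..u0}. T - 2*\<beta>*u + C*u^2) \<le> T - 2*\<beta>*u + C*u^2"
      using u lower by (intro cINF_lower bdd_belowI[of _ T]) auto
    ultimately show "(INF u\<in>{0<..u0}. T - 2*\<beta>*u + C*u^2) \<le> T + e" by linarith
  qed
qed

lemma INF_quadratic_Ioc_endpoint:
  fixes T \<beta> C u0 :: real
  assumes u0: "u0 > 0" and C: "C \<ge> 0" and \<beta>: "\<beta> \<ge> C * u0"
  shows "(INF u\<in>{0<..u0}. T - 2*\<beta>*u + C*u^2) = T - 2*\<beta>*u0 + C*u0^2"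
proof (rule INF_attained)
  show "u0 \<in> {0<..u0}" using u0 by simp
  fix u assume u: "u \<in> {0<..u0}"
  have "C * (u + u0) \<le> C * (u0 + u0)" using u C by (intro mult_left_mono) auto
  hence "0 \<le> (u0 - u) * (2*\<beta> - C*(u + u0))"
    using u \<beta> by (intro mult_nonneg_nonneg) auto
  also have "\<dots> = (T - 2*\<beta>*u + C*u^2) - (T - 2*\<beta>*u0 + C*u0^2)"
    by (simp add: algebra_simps power2_eq_square)
  finally show "T - 2*\<beta>*u0 + C*u0^2 \<le> T - 2*\<beta>*u + C*u^2" by simp
qed

lemma INF_quadratic_Ioc_vertex:
  fixes T \<beta> C u0 :: real
  assumes C: "C > 0" and \<beta>: "0 < \<beta>" "\<beta> < C * u0"
  shows "(INF u\<in>{0<..u0}. T - 2*\<beta>*u + C*u^2) = T - \<beta>^2/C"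
proof -
  have "(INF u\<in>{0<..u0}. T - 2*\<beta>*u + C*u^2) = T - 2*\<beta>*(\<beta>/C) + C*(\<beta>/C)^2"
  proof (rule INF_attained)
    show "\<beta>/C \<in> {0<..u0}" using \<beta> C by (auto simp: field_simps)
    fix u
    have "(T - 2*\<beta>*u + C*u^2) - (T - 2*\<beta>*(\<beta>/C) + C*(\<beta>/C)^2) = C * (u - \<beta>/C)^2"
      using C by (simp add: field_simps power2_eq_square)
    thus "T - 2*\<beta>*(\<beta>/C) + C*(\<beta>/C)^2 \<le> T - 2*\<beta>*u + C*u^2"
      using C by (smt (verit) zero_le_power2 mult_nonneg_nonneg)
  qed
  also have "\<dots> = T - \<beta>^2/C" using C by (simp add: field_simps power2_eq_square)
  finally show ?thesis .
qed

lemma cmod_diff_sq: "(cmod (u - v))^2 = (cmod u)^2 - 2 * Re (u * cnj v) + (cmod v)^2"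
  by (simp only: cmod_power2) (simp add: power2_eq_square algebra_simps)

lemma image_reciprocal_affine:
  fixes E k :: real
  assumes "E > 0" "k > 0"
  shows "(\<lambda>lam. 1 / (E + lam * k)) ` {0..} = {0<..1/E}"
proof (intro equalityI subsetI)
  fix v assume "v \<in> (\<lambda>lam. 1 / (E + lam * k)) ` {0..}"
  then obtain lam where "lam \<ge> 0" "v = 1 / (E + lam * k)" by auto
  moreover have "E \<le> E + lam * k" "E + lam * k > 0"
    using assms \<open>lam \<ge> 0\<close> by (simp_all add: add_pos_nonneg)
  ultimately show "v \<in> {0<..1/E}"
    using assms by (auto intro!: divide_left_mono)
next
  fix v assume v: "v \<in> {0<..1/E}"
  hence "(1/v - E) / k \<ge> 0" "v = 1 / (E + (1/v - E) / k * k)"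
    using assms by (auto simp: field_simps)
  thus "v \<in> (\<lambda>lam. 1 / (E + lam * k)) ` {0..}" by force
qed

locale interference_model =
  steering_pair h0 h1 "of_real (sin tau) * cis phiz" "cos tau"
  for h0 h1 :: "complex^'n" and tau phiz :: real +
  fixes s0 s1 sn phic :: real and c1 :: complex
  assumes s1_pos: "s1 > 0" and sn_pos: "sn > 0"
    and c1_polar: "c1 = of_real (cmod c1) * cis phic" and c1_bound: "cmod c1 \<le> s0 * s1"
begin

definition delta2 :: complex where
  "delta2 = of_real (sn^2 * tan tau) - of_real (cmod c1 * cos tau) * cis (phic + phiz)"

definition mse_curve :: "complex \<Rightarrow> real \<Rightarrow> real" where
  "mse_curve d u = sn^2 * ((tan tau)^2 + 1) - 2 * (Re d * sn^2 * tan tau) * u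
     + ((cmod d)^2 * (s1^2 * (cos tau)^2 + sn^2)) * u^2"

lemma cmod_c1_sq_le: "(cmod c1)^2 \<le> s0^2 * s1^2"
  using power_mono[OF c1_bound] by (simp add: power_mult_distrib)

lemma mvdr_denom_pos: "s1^2 * (cos tau)^2 + sn^2 > 0"
  using s1_pos sn_pos by (simp add: add_nonneg_pos)

lemma JMSE_beam_polar:
  "JMSE s02 (s1^2) (sn^2) c1' h0 h1 (beam (of_real (u * cos tau) * cis phiz * cnj d)) = mse_curve d u"
proof -
  let ?c = "cos tau" and ?s = "sin tau"
  have c: "?c \<noteq> 0" using c_pos by simp
  have "of_real (u * ?c) * cis phiz * cnj d - of_real ?s * cis phiz
      = cis phiz * (of_real (u * ?c) * cnj d - of_real ?s)"
    by (simp add: algebra_simps)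
  hence leak: "(cmod (of_real (u * ?c) * cis phiz * cnj d - of_real ?s * cis phiz))^2
      = (u * ?c)^2 * (cmod d)^2 - 2 * (u * ?c * ?s * Re d) + ?s^2"
    by (simp add: norm_mult cmod_diff_sq power_mult_distrib)
  have resp: "(cmod (of_real (u * ?c) * cis phiz * cnj d))^2 = (u * ?c)^2 * (cmod d)^2"
    by (simp add: norm_mult power_mult_distrib)
  show ?thesis
    unfolding JMSE_beam mse_curve_def tan_def leak resp sin_squared_eq
    using c by (simp add: field_simps power2_eq_square)
qed

lemma Re_delta2: "Re delta2 = sn^2 * tan tau - cmod c1 * cos tau * cos (phic + phiz)"
  by (simp add: delta2_def)

lemma cmod_delta2_minus: "cmod (delta2 - of_real (sn^2 * tan tau)) = cmod c1 * cos tau"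
  using c_pos by (simp add: delta2_def norm_mult)

lemma rzf_numerator_polar:
  "of_real (sn^2) * (of_real (sin tau) * cis phiz) - of_real ((cos tau)^2) * cnj c1
     = of_real (cos tau) * cis phiz * cnj delta2"
proof -
  have "cnj c1 = of_real (cmod c1) * cis (- phic)"
    by (subst c1_polar) (simp add: cis_cnj)
  moreover have "cis phiz * cis (- (phic + phiz)) = cis (- phic)"
    by (simp add: cis_mult)
  ultimately show ?thesis
    using c_pos by (simp add: delta2_def tan_def cis_cnj field_simps power2_eq_square)
qed

lemma tan_sq_add_one: "(tan tau)^2 + 1 = 1 / (cos tau)^2"
  using tan_sec[of tau] c_pos by (simp add: power_inverse field_simps)

lemma zf_times_mvdr_denom:
  "sn^2 * ((tan tau)^2 + 1) * (s1^2 * (cos tau)^2 + sn^2) = sn^2 * (s1^2 + sn^2) + (sn^2 * tan tau)^2"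
proof -
  have "sn^2 * ((tan tau)^2 + 1) * (s1^2 * (cos tau)^2 + sn^2)
      = sn^2 * s1^2 * (((tan tau)^2 + 1) * (cos tau)^2) + sn^2 * sn^2 * ((tan tau)^2 + 1)"
    by (simp add: algebra_simps)
  also have "((tan tau)^2 + 1) * (cos tau)^2 = 1"
    using c_pos by (simp add: tan_sq_add_one)
  finally show ?thesis
    by (simp add: algebra_simps power_mult_distrib)
qed

lemma mse_curve_mvdr_point:
  "mse_curve d (1 / (s1^2 * (cos tau)^2 + sn^2))
     = (sn^2 * (s1^2 + sn^2) + (cmod (d - of_real (sn^2 * tan tau)))^2) / (s1^2 * (cos tau)^2 + sn^2)"
proof -
  define E where "E = s1^2 * (cos tau)^2 + sn^2"
  define b where "b = sn^2 * tan tau"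
  have E: "E > 0" using mvdr_denom_pos by (simp add: E_def)
  have "mse_curve d (1 / E) = (sn^2 * ((tan tau)^2 + 1) * E - 2 * (Re d * b) + (cmod d)^2) / E"
    unfolding mse_curve_def E_def[symmetric]
    using E by (simp add: b_def field_simps power2_eq_square)
  also have "\<dots> = (sn^2 * (s1^2 + sn^2) + (cmod (d - of_real b))^2) / E"
    unfolding E_def zf_times_mvdr_denom cmod_diff_sq b_def[symmetric] by simp
  finally show ?thesis unfolding E_def b_def .
qed

lemma MSEfun_eq:
  assumes "lam \<ge> 0"
  shows "MSEfun (s0^2) (s1^2) (sn^2) c1 h0 h1 lam
    = mse_curve delta2 (1 / ((s1^2 + lam) * (cos tau)^2 + sn^2))"
proof -
  define D where "D = (s1^2 + lam) * (cos tau)^2 + sn^2"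
  have "(cmod c1)^2 \<le> s0^2 * (s1^2 + lam)"
    using cmod_c1_sq_le assms by (smt (verit) mult_left_mono zero_le_power2)
  hence "wRZF (s0^2) (s1^2) (sn^2) c1 h0 h1 lam
      = beam ((of_real (sn^2) * (of_real (sin tau) * cis phiz) - of_real ((cos tau)^2) * cnj c1) / of_real D)"
    unfolding wRZF_def Rcov_add_outer D_def using assms sn_pos by (intro dlbf_Rcov) auto
  also have "\<dots> = beam (of_real (1 / D * cos tau) * cis phiz * cnj delta2)"
    unfolding rzf_numerator_polar by simp
  finally show ?thesis
    by (simp only: MSEfun_def JMSE_beam_polar D_def)
qed

lemma MSE_MVDR_eq_MSEfun: "MSE_MVDR (s0^2) (s1^2) (sn^2) c1 h0 h1 = MSEfun (s0^2) (s1^2) (sn^2) c1 h0 h1 0"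
  by (simp add: MSE_MVDR_def wMVDR_def MSEfun_def)

lemma MSE_MVDR_eq:
  "MSE_MVDR (s0^2) (s1^2) (sn^2) c1 h0 h1
     = (sn^2 * (s1^2 + sn^2) + (cmod c1)^2 * (cos tau)^2) / (s1^2 * (cos tau)^2 + sn^2)"
proof -
  have "MSE_MVDR (s0^2) (s1^2) (sn^2) c1 h0 h1 = mse_curve delta2 (1 / (s1^2 * (cos tau)^2 + sn^2))"
    using MSEfun_eq[of 0] by (simp add: MSE_MVDR_eq_MSEfun)
  thus ?thesis
    unfolding mse_curve_mvdr_point cmod_delta2_minus by (simp add: power_mult_distrib)
qed

lemma MSE_ZF_eq: "MSE_ZF (s0^2) (s1^2) (sn^2) c1 h0 h1 = sn^2 * ((tan tau)^2 + 1)"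
proof -
  have "wZF (s0^2) (s1^2) (sn^2) c1 h0 h1 = beam 0"
    using sn_pos cmod_c1_sq_le by (simp add: wZF_Rcov)
  also have "beam 0 = beam (of_real (0 * cos tau) * cis phiz * cnj 0)"
    by simp
  finally show ?thesis
    by (simp only: MSE_ZF_def JMSE_beam_polar) (simp add: mse_curve_def)
qed

lemma MSE_MMSEDR_eq:
  "MSE_MMSEDR (s0^2) (s1^2) (sn^2) c1 h0 h1 = sn^2 * (s1^2 + sn^2) / (s1^2 * (cos tau)^2 + sn^2)"
proof -
  define E where "E = s1^2 * (cos tau)^2 + sn^2"
  have "wMMSEDR (s1^2) (sn^2) h0 h1
      = beam ((of_real (sn^2) * (of_real (sin tau) * cis phiz) - of_real ((cos tau)^2) * cnj 0) / of_real E)"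
    unfolding wMMSEDR_def Rcov_no_signal[of "sn^2" "s1^2" h1 h0] E_def using sn_pos by (intro dlbf_Rcov) auto
  also have "\<dots> = beam (of_real (1 / E * cos tau) * cis phiz * cnj (of_real (sn^2 * tan tau)))"
    using c_pos by (simp add: tan_def mult_ac)
  finally have "MSE_MMSEDR (s0^2) (s1^2) (sn^2) c1 h0 h1 = mse_curve (of_real (sn^2 * tan tau)) (1 / E)"
    by (simp only: MSE_MMSEDR_def JMSE_beam_polar)
  thus ?thesis
    unfolding E_def mse_curve_mvdr_point by simp
qed

lemma MSE_RZF_eq:
  "MSE_RZF (s0^2) (s1^2) (sn^2) c1 h0 h1
     = (INF u\<in>{0<..1 / (s1^2 * (cos tau)^2 + sn^2)}. mse_curve delta2 u)"
proof -
  have "MSE_RZF (s0^2) (s1^2) (sn^2) c1 h0 h1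
      = (INF lam\<in>{0..}. mse_curve delta2 (1 / (s1^2 * (cos tau)^2 + sn^2 + lam * (cos tau)^2)))"
    unfolding MSE_RZF_def by (intro INF_cong refl) (simp add: MSEfun_eq algebra_simps)
  also have "\<dots> = (INF u\<in>(\<lambda>lam. 1 / (s1^2 * (cos tau)^2 + sn^2 + lam * (cos tau)^2)) ` {0..}.
      mse_curve delta2 u)"
    by (simp add: image_image)
  also have "\<dots> = (INF u\<in>{0<..1 / (s1^2 * (cos tau)^2 + sn^2)}. mse_curve delta2 u)"
    using image_reciprocal_affine[OF mvdr_denom_pos, of "(cos tau)^2"] c_pos by simp
  finally show ?thesis .
qed

lemma MSEfun_eq_MSE_ZF_if_delta2_0:
  assumes "delta2 = 0" "lam \<ge> 0"
  shows "MSEfun (s0^2) (s1^2) (sn^2) c1 h0 h1 lam = MSE_ZF (s0^2) (s1^2) (sn^2) c1 h0 h1"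
  using assms by (simp add: MSEfun_eq MSE_ZF_eq mse_curve_def)

definition gam :: real where
  "gam = Re delta2 * sn^2 * tan tau / (cmod delta2)^2"

context
  assumes delta2: "delta2 \<noteq> 0"
begin

lemma MSE_RZF_eq_INF_quadratic:
  "MSE_RZF (s0^2) (s1^2) (sn^2) c1 h0 h1
     = (INF u\<in>{0<..1 / (s1^2 * (cos tau)^2 + sn^2)}. sn^2 * ((tan tau)^2 + 1)
          - 2 * (gam * (cmod delta2)^2) * u
          + ((cmod delta2)^2 * (s1^2 * (cos tau)^2 + sn^2)) * u^2)"
  using delta2 by (simp add: MSE_RZF_eq mse_curve_def gam_def)

lemma MSE_RZF_eq_ZF_if_gam_nonpos:
  assumes "gam \<le> 0"
  shows "MSE_RZF (s0^2) (s1^2) (sn^2) c1 h0 h1 = MSE_ZF (s0^2) (s1^2) (sn^2) c1 h0 h1"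
  unfolding MSE_RZF_eq_INF_quadratic MSE_ZF_eq
  using assms mvdr_denom_pos
  by (intro INF_quadratic_Ioc_nonpos) (auto simp: mult_nonpos_nonneg)

lemma MSE_RZF_eq_MVDR_if_gam_ge_1:
  assumes "gam \<ge> 1"
  shows "MSE_RZF (s0^2) (s1^2) (sn^2) c1 h0 h1 = MSE_MVDR (s0^2) (s1^2) (sn^2) c1 h0 h1"
proof -
  have "MSE_RZF (s0^2) (s1^2) (sn^2) c1 h0 h1 = mse_curve delta2 (1 / (s1^2 * (cos tau)^2 + sn^2))"
    unfolding MSE_RZF_eq_INF_quadratic using assms mvdr_denom_pos delta2
    by (subst INF_quadratic_Ioc_endpoint) (auto simp: mse_curve_def gam_def)
  thus ?thesis
    using MSEfun_eq[of 0] by (simp add: MSE_MVDR_eq_MSEfun)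
qed

lemma MSE_RZF_eq_MMSEDR_if_gam_between:
  assumes "0 < gam" "gam < 1"
  shows "MSE_RZF (s0^2) (s1^2) (sn^2) c1 h0 h1 = MSE_MMSEDR (s0^2) (s1^2) (sn^2) c1 h0 h1
    + (1 - (cmod (of_real (Re delta2) / delta2))^2) * (sn^4 * (tan tau)^2) / (s1^2 * (cos tau)^2 + sn^2)"
proof -
  define E where "E = s1^2 * (cos tau)^2 + sn^2"
  define N where "N = (cmod delta2)^2"
  have E: "E > 0" and N: "N > 0"
    using mvdr_denom_pos delta2 by (simp_all add: E_def N_def)
  have "MSE_RZF (s0^2) (s1^2) (sn^2) c1 h0 h1
      = sn^2 * ((tan tau)^2 + 1) - (gam * N)^2 / (N * E)"
    unfolding MSE_RZF_eq_INF_quadratic E_def[symmetric] N_def[symmetric] using assms E N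
    by (intro INF_quadratic_Ioc_vertex) (auto simp: field_simps)
  also have "\<dots> = (sn^2 * (s1^2 + sn^2) + (sn^2 * tan tau)^2) / E - (gam * N)^2 / (N * E)"
    using E by (simp add: E_def zf_times_mvdr_denom[symmetric])
  also have "\<dots> = sn^2 * (s1^2 + sn^2) / E + (1 - (Re delta2)^2 / N) * (sn^4 * (tan tau)^2) / E"
    unfolding gam_def N_def[symmetric]
    using E N by (simp add: field_simps power2_eq_square power4_eq_xxxx)
  finally show ?thesis
    by (simp add: MSE_MMSEDR_eq E_def N_def norm_divide power_divide)
qed

end

end

theorem theorem5:
  fixes h0 h1 :: "complex^'n"
    and s0 s1 sn tau phiz phic :: real
    and c1 :: complex
  assumes "CARD('n) \<ge> 2"
    and "norm h0 = 1" and "norm h1 = 1"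
    and "herm h0 h1 = of_real (sin tau) * cis phiz"
    and "0 \<le> tau" and "tau < pi/2"
    and "0 \<le> phiz" and "phiz < 2*pi"
    and "s0 > 0" and "s1 > 0" and "sn > 0"
    and "c1 = of_real (cmod c1) * cis phic"
    and "cmod c1 \<le> s0 * s1"
  defines "d1 \<equiv> sn^2 * tan tau - cmod c1 * cos tau * cos (phic + phiz)"
    and "d2 \<equiv> of_real (sn^2 * tan tau) - of_real (cmod c1 * cos tau) * cis (phic + phiz)"
    and "mMVDR \<equiv> MSE_MVDR (s0^2) (s1^2) (sn^2) c1 h0 h1"
    and "mZF \<equiv> MSE_ZF (s0^2) (s1^2) (sn^2) c1 h0 h1"
    and "mDR \<equiv> MSE_MMSEDR (s0^2) (s1^2) (sn^2) c1 h0 h1"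
    and "mRZF \<equiv> MSE_RZF (s0^2) (s1^2) (sn^2) c1 h0 h1"
  shows "mMVDR = (sn^2 * (s1^2 + sn^2) + (cmod c1)^2 * (cos tau)^2) / (s1^2 * (cos tau)^2 + sn^2)
       \<and> mZF = sn^2 * ((tan tau)^2 + 1)
       \<and> mDR = (sn^2 * (s1^2 + sn^2)) / (s1^2 * (cos tau)^2 + sn^2)
       \<and> (d2 = 0 \<longrightarrow> (\<forall>lam\<ge>0. MSEfun (s0^2) (s1^2) (sn^2) c1 h0 h1 lam = mZF \<and> mZF = mMVDR))
       \<and> (d2 \<noteq> 0 \<longrightarrow>
           (let gam = d1 * sn^2 * tan tau / (cmod d2)^2 in
             (gam \<le> 0 \<longrightarrow> mRZF = mZF)
           \<and> (0 < gam \<and> gam < 1 \<longrightarrow>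
                mRZF = mDR + (1 - (cmod (of_real d1 / d2))^2) * (sn^4 * (tan tau)^2) / (s1^2 * (cos tau)^2 + sn^2))
           \<and> (gam \<ge> 1 \<longrightarrow> mRZF = mMVDR)))"
proof -
  interpret interference_model h0 h1 tau phiz s0 s1 sn phic c1
  proof
    show "cos tau > 0" using assms(5,6) by (intro cos_gt_zero_pi) auto
    show "(cmod (of_real (sin tau) * cis phiz))^2 + (cos tau)^2 = 1"
      by (simp add: norm_mult)
  qed (use assms in auto)
  have d: "d1 = Re delta2" "d2 = delta2"
    unfolding d1_def d2_def Re_delta2 by (simp_all add: delta2_def)
  show ?thesis
    unfolding mMVDR_def mZF_def mDR_def mRZF_def Let_def d gam_def[symmetric]
    using MSE_MVDR_eq MSE_ZF_eq MSE_MMSEDR_eq MSEfun_eq_MSE_ZF_if_delta2_0 MSE_MVDR_eq_MSEfun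
      MSE_RZF_eq_ZF_if_gam_nonpos MSE_RZF_eq_MVDR_if_gam_ge_1
      MSE_RZF_eq_MMSEDR_if_gam_between
    by auto
qed

end
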